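(* Let $X$ be a rank-one subshift, associated to a rank-one transformation on a finite measure space, with cut sequence $(r_n)$ and spacer sequence $(s_{n,i})$ such that $s_{n,r_n}=0$ for all sufficiently large $n$. If for infinitely many $n$ the set $\{s_{m,i}: m\ge n,\ 0\le i<r_m\}$ contains at least three distinct values, then $\limsup_{q\to\infty} p(q)/q\ge 2$.
   Context: Rank-one transformations: given a cut sequence $(r_n)_{n\ge1}$ of positive integers and a spacer sequence $(s_{n,i})_{n\ge1,0\le i\le r_n}$ of nonnegative integers, the rank-one transformation is built by cutting and stacking ($C_1=[0,1)$; $C_{n+1}$ obtained by cutting $C_n$ into $r_n+1$ equal-width subcolumns, adding $s_{n,i}$ spacers atop subcolumn $i$, stacking left to right); the space has finite measure iff $\sum_n\frac{1}{r_nh_n}\sum_i s_{n,i}<\infty$. The associated subshift is given by $B_1=0$, $B_{n+1}=B_n1^{s_{n,0}}\cdots B_n1^{s_{n,r_n}}$ ($h_n=$ length of $B_n$): all $x\in\{0,1\}^{\mathbb Z}$ whose finite subwords are subwords of some $B_n$; $p(q)$ is the number of distinct words of length $q$ occurring in it. *)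

theory Defs
  imports Complex_Main "HOL-Library.Sublist" "HOL-Library.Extended_Real" "HOL-Library.Liminf_Limsup"
begin

text \<open>Cut sequence r (r n for n \<ge> 1), spacer sequence s n i (n \<ge> 1, 0 \<le> i \<le> r n).
  rk_word_aux r s k is the word B_(k+1).\<close>
primrec rk_word_aux :: "(nat \<Rightarrow> nat) \<Rightarrow> (nat \<Rightarrow> nat \<Rightarrow> nat) \<Rightarrow> nat \<Rightarrow> nat list" where
  "rk_word_aux r s 0 = [0]"
| "rk_word_aux r s (Suc k) =
     concat (map (\<lambda>i. rk_word_aux r s k @ replicate (s (Suc k) i) 1) [0..<Suc (r (Suc k))])"

definition rk_word :: "(nat \<Rightarrow> nat) \<Rightarrow> (nat \<Rightarrow> nat \<Rightarrow> nat) \<Rightarrow> nat \<Rightarrow> nat list" where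
  "rk_word r s n = rk_word_aux r s (n - 1)"

definition rk_height :: "(nat \<Rightarrow> nat) \<Rightarrow> (nat \<Rightarrow> nat \<Rightarrow> nat) \<Rightarrow> nat \<Rightarrow> nat" where
  "rk_height r s n = length (rk_word r s n)"

definition window :: "(int \<Rightarrow> nat) \<Rightarrow> int \<Rightarrow> nat \<Rightarrow> nat list" where
  "window x i q = map (\<lambda>j. x (i + int j)) [0..<q]"

definition rk_subshift :: "(nat \<Rightarrow> nat) \<Rightarrow> (nat \<Rightarrow> nat \<Rightarrow> nat) \<Rightarrow> (int \<Rightarrow> nat) set" where
  "rk_subshift r s = {x. (\<forall>k. x k \<in> {0, 1}) \<and>
      (\<forall>i q. \<exists>n\<ge>1. sublist (window x i q) (rk_word r s n))}"

definition complexity :: "(nat \<Rightarrow> nat) \<Rightarrow> (nat \<Rightarrow> nat \<Rightarrow> nat) \<Rightarrow> nat \<Rightarrow> nat" where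
  "complexity r s q = card {w. length w = q \<and> (\<exists>x\<in>rk_subshift r s. \<exists>i. w = window x i q)}"

definition rk_finite_measure :: "(nat \<Rightarrow> nat) \<Rightarrow> (nat \<Rightarrow> nat \<Rightarrow> nat) \<Rightarrow> bool" where
  "rk_finite_measure r s \<longleftrightarrow>
     summable (\<lambda>n. if n \<ge> 1 then real (\<Sum>i\<le>r n. s n i) / (real (r n) * real (rk_height r s n)) else 0)"

end

theory Submission
  imports Defs
begin

text \<open>Once \<open>s n (r n) = 0\<close> for \<open>n \<ge> N\<close>, every \<open>B n\<close> with \<open>n \<ge> N\<close> is a suffix of all later
  words and ends in \<open>0 1^e\<close> for one fixed \<open>e\<close>. Fix \<open>n \<ge> N\<close>, let \<open>a\<close> be the least spacer used at
  levels \<open>\<ge> n\<close> and \<open>b < c\<close> two larger ones. As \<open>B m 1^k B m\<close> occurs in \<open>B (m+1)\<close> for each such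
  spacer \<open>k\<close>, every word \<open>u 1^a\<close> with \<open>u\<close> a suffix of \<open>B n\<close> is right special (it is followed by
  0, and, as a prefix of \<open>u 1^b\<close>, by 1), and so is \<open>1^q\<close> for \<open>q < c\<close>. The lengths of the final
  runs of 1s separate these words, giving two right special words of every length
  \<open>a + e < q < a + h n\<close> outside \<open>[c, b + e]\<close>; hence \<open>p (a + h n) \<ge> 2 (h n - 2 e - 1)\<close>. Finally \<open>a\<close>
  is at most the mean spacer at level \<open>n\<close>, which is \<open>o (h n)\<close> by the finite measure condition, so
  \<open>p q / q \<ge> 2 - o 1\<close> along \<open>q = a + h n\<close>. Subwords of the \<open>B n\<close> are words of the subshift
  because each \<open>B n\<close> sits inside a point obtained by nesting it in the later \<open>B k\<close>.\<close>

lemma append_Cons_replicate_eq_imp_eq: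
  assumes "x \<noteq> y" "P @ x # replicate i y = Q @ x # replicate j y"
  shows "i = j"
proof -
  have "takeWhile (\<lambda>z. z = y) (replicate i y @ x # xs) = replicate i y" for i xs
    using assms(1) by (induction i) auto
  then have "takeWhile (\<lambda>z. z = y) (rev (P @ x # replicate i y)) = replicate i y" for P i
    by simp
  then show ?thesis using assms(2) by (metis length_replicate)
qed

lemma split_last_zero:
  assumes "0 \<in> set w" "set w \<subseteq> {0, 1 :: nat}"
  shows "\<exists>P e. w = P @ 0 # replicate e 1"
proof -
  obtain P v where "w = P @ 0 # v" "0 \<notin> set v"
    using split_list_last[OF assms(1)] by blast
  moreover have "v = replicate (length v) 1"
    using calculation assms(2) by (intro replicate_eqI) auto
  ultimately show ?thesis by metis
qed

lemma Limsup_mono_filter: "F \<le> G \<Longrightarrow> Limsup F f \<le> Limsup G f"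
  unfolding Limsup_def by (rule INF_superset_mono) (auto simp: le_filter_def)

lemma limsup_ge_tendsto_along:
  fixes f g :: "nat \<Rightarrow> real"
  assumes "\<forall>\<^sub>F n in sequentially. g n \<le> f (Q n)" and "g \<longlonglongrightarrow> L"
    and "filterlim Q at_top sequentially"
  shows "ereal L \<le> limsup (\<lambda>q. ereal (f q))"
proof -
  have "ereal L = limsup (\<lambda>n. ereal (g n))"
    using assms(2) by (intro lim_imp_Limsup[symmetric]) auto
  also have "\<dots> \<le> limsup (\<lambda>n. ereal (f (Q n)))"
    using assms(1) by (intro Limsup_mono) (auto elim: eventually_mono)
  also have "\<dots> \<le> Limsup (filtermap Q sequentially) (\<lambda>q. ereal (f q))"
    by (rule Limsup_filtermap_ge)
  also have "\<dots> \<le> limsup (\<lambda>q. ereal (f q))"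
    using assms(3) by (intro Limsup_mono_filter) (simp add: filterlim_def)
  finally show ?thesis .
qed

locale rank_one =
  fixes r :: "nat \<Rightarrow> nat" and s :: "nat \<Rightarrow> nat \<Rightarrow> nat"
  assumes cut_pos: "\<And>n. n \<ge> 1 \<Longrightarrow> r n \<ge> 1"
begin

abbreviation B :: "nat \<Rightarrow> nat list" where "B \<equiv> rk_word r s"
abbreviation h :: "nat \<Rightarrow> nat" where "h \<equiv> rk_height r s"

lemma rk_word_Suc:
  "n \<ge> 1 \<Longrightarrow> B (Suc n) = concat (map (\<lambda>i. B n @ replicate (s n i) 1) [0..<Suc (r n)])"
  by (cases n) (auto simp: rk_word_def)

lemma rk_word_Cons: "\<exists>v. B n = 0 # v"
proof -
  have "\<exists>v. rk_word_aux r s k = 0 # v" for k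
    by (induction k) (auto simp: upt_conv_Cons simp del: upt_Suc)
  then show ?thesis by (simp add: rk_word_def)
qed

lemma set_rk_word: "set (B n) \<subseteq> {0, 1}"
proof -
  have "set (rk_word_aux r s k) \<subseteq> {0, 1}" for k
    by (induction k) auto
  then show ?thesis by (simp add: rk_word_def)
qed

lemma rk_height_pos: "h n > 0"
  using rk_word_Cons[of n] by (auto simp: rk_height_def)

lemma rk_word_Suc_split:
  assumes "n \<ge> 1" "i < r n"
  shows "\<exists>R. B (Suc n) = concat (map (\<lambda>j. B n @ replicate (s n j) 1) [0..<i])
                        @ B n @ replicate (s n i) 1 @ B n @ R"
proof -
  have "[0..<Suc (r n)] = [0..<i] @ i # Suc i # [Suc (Suc i)..<Suc (r n)]"
    using assms(2) upt_add_eq_append[of 0 i "Suc (r n) - i"]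
    by (simp add: upt_conv_Cons del: upt_Suc)
  then show ?thesis using assms(1) by (simp add: rk_word_Suc del: upt_Suc)
qed

lemma rk_word_Suc_first: "n \<ge> 1 \<Longrightarrow> \<exists>R. B (Suc n) = B n @ replicate (s n 0) 1 @ B n @ R"
  using rk_word_Suc_split[of n 0] cut_pos[of n] by simp

lemma sublist_rk_word_spacer:
  "n \<ge> 1 \<Longrightarrow> i < r n \<Longrightarrow> sublist (B n @ replicate (s n i) 1 @ B n) (B (Suc n))"
  using rk_word_Suc_split by (metis append.assoc sublist_appendI)

lemma suffix_rk_word_Suc: "n \<ge> 1 \<Longrightarrow> s n (r n) = 0 \<Longrightarrow> suffix (B n) (B (Suc n))"
  by (simp add: rk_word_Suc suffix_def upt_Suc_append del: upt_Suc)

lemma suffix_rk_word: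
  assumes "1 \<le> n" "n \<le> m" "\<forall>k\<ge>n. s k (r k) = 0"
  shows "suffix (B n) (B m)"
  using assms(2)
proof (induction m rule: dec_induct)
  case (step m)
  then show ?case
    using suffix_rk_word_Suc[of m] assms by (meson order.trans suffix_order.order_trans)
qed simp

lemma rk_height_ge: "n \<le> h n"
proof (induction n)
  case (Suc n)
  have "2 * h n \<le> h (Suc n)" if "n \<ge> 1"
    using rk_word_Suc_first[OF that] by (auto simp: rk_height_def)
  then show ?case
    using Suc rk_height_pos[of n] rk_height_pos[of "Suc n"] by (cases "n = 0") auto
qed simp

text \<open>Inside \<open>B (Suc k)\<close> we follow the second copy of \<open>B k\<close> for odd \<open>k\<close> and the first one
  for even \<open>k\<close>, so that the followed occurrence of a fixed \<open>B n0\<close> moves away from both ends.\<close>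

definition shift :: "nat \<Rightarrow> nat" where
  "shift k = (if odd k then h k + s k 0 else 0)"

lemma rk_word_Suc_embed:
  assumes "k \<ge> 1"
  obtains L R where "B (Suc k) = L @ B k @ R" "length L = shift k"
    "odd k \<Longrightarrow> L \<noteq> []" "even k \<Longrightarrow> R \<noteq> []"
proof -
  obtain R where R: "B (Suc k) = B k @ replicate (s k 0) 1 @ B k @ R"
    using rk_word_Suc_first[OF assms] by blast
  have "B k \<noteq> []" using rk_word_Cons[of k] by auto
  show thesis
  proof (cases "odd k")
    case True
    then show thesis
      using that[of "B k @ replicate (s k 0) 1" R] R \<open>B k \<noteq> []\<close>
      by (simp add: shift_def rk_height_def)
  next
    case False
    then show thesis
      using that[of "[]" "replicate (s k 0) 1 @ B k @ R"] R \<open>B k \<noteq> []\<close> by (simp add: shift_def)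
  qed
qed

context
  fixes n0 :: nat
  assumes n0: "n0 \<ge> 1"
begin

definition origin :: "nat \<Rightarrow> nat" where
  "origin k = (\<Sum>j = n0..<k. shift j)"

lemma rk_word_embed:
  assumes "n0 \<le> k" "k \<le> k'"
  shows "\<exists>L R. B k' = L @ B k @ R \<and> length L + origin k = origin k'"
  using assms(2)
proof (induction k' rule: dec_induct)
  case base
  show ?case by (intro exI[of _ "[]"]) simp
next
  case (step m)
  then obtain L R where LR: "B m = L @ B k @ R" "length L + origin k = origin m"
    by blast
  obtain L' R' where "B (Suc m) = L' @ B m @ R'" "length L' = shift m"
    using rk_word_Suc_embed[of m] n0 assms step.hyps by (metis order_trans)
  moreover have "origin (Suc m) = origin m + shift m"
    using assms step.hyps by (simp add: origin_def)
  ultimately show ?case using LR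
    by (intro exI[of _ "L' @ L"] exI[of _ "R @ R'"]) simp
qed

lemma rk_word_origin_margins:
  "\<exists>L R. B (n0 + 2 * m) = L @ B n0 @ R \<and> length L = origin (n0 + 2 * m)
         \<and> m \<le> length L \<and> m \<le> length R"
proof (induction m)
  case 0
  show ?case by (intro exI[of _ "[]"] exI[of _ "[]"]) (simp add: origin_def)
next
  case (Suc m)
  define k where "k = n0 + 2 * m"
  obtain L R where LR: "B k = L @ B n0 @ R" "length L = origin k" "m \<le> length L" "m \<le> length R"
    using Suc.IH by (auto simp: k_def)
  have k: "k \<ge> 1" "n0 \<le> k" using n0 by (auto simp: k_def)
  obtain L1 R1 where 1: "B (Suc k) = L1 @ B k @ R1" "length L1 = shift k"
    "odd k \<Longrightarrow> L1 \<noteq> []" "even k \<Longrightarrow> R1 \<noteq> []"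
    using rk_word_Suc_embed[OF k(1)] by blast
  obtain L2 R2 where 2: "B (Suc (Suc k)) = L2 @ B (Suc k) @ R2" "length L2 = shift (Suc k)"
    "odd (Suc k) \<Longrightarrow> L2 \<noteq> []" "even (Suc k) \<Longrightarrow> R2 \<noteq> []"
    using rk_word_Suc_embed[OF le_SucI[OF k(1)]] by blast
  have "L1 @ L2 \<noteq> [] \<and> R1 @ R2 \<noteq> []"
    using 1(3,4) 2(3,4) by (cases "odd k") auto
  then have "1 \<le> length L1 + length L2" "1 \<le> length R1 + length R2"
    by (simp_all add: Suc_le_eq)
  moreover have "origin (Suc (Suc k)) = origin k + shift k + shift (Suc k)"
    using k by (simp add: origin_def)
  moreover have "B (Suc (Suc k)) = (L2 @ L1 @ L) @ B n0 @ (R @ R1 @ R2)"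
    using LR(1) 1(1) 2(1) by simp
  ultimately have "\<exists>L R. B (Suc (Suc k)) = L @ B n0 @ R \<and> length L = origin (Suc (Suc k))
                    \<and> Suc m \<le> length L \<and> Suc m \<le> length R"
    using LR(2-4) 1(2) 2(2) by (intro exI[of _ "L2 @ L1 @ L"] exI[of _ "R @ R1 @ R2"]) simp
  moreover have "n0 + 2 * Suc m = Suc (Suc k)" by (simp add: k_def)
  ultimately show ?case by simp
qed

lemma origin_margins: "m \<le> origin (n0 + 2 * m) \<and> m + origin (n0 + 2 * m) < h (n0 + 2 * m)"
proof -
  obtain L R where "B (n0 + 2 * m) = L @ B n0 @ R" "length L = origin (n0 + 2 * m)"
    "m \<le> length L" "m \<le> length R"
    using rk_word_origin_margins by blast
  moreover have "h (n0 + 2 * m) = length L + h n0 + length R"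
    using calculation(1) by (simp add: rk_height_def)
  ultimately show ?thesis using rk_height_pos[of n0] by linarith
qed

text \<open>The limit of the words \<open>B k\<close>, each positioned so that the followed occurrence of \<open>B n0\<close>
  starts at coordinate 0; by \<open>origin_margins\<close>, \<open>B (n0 + 2 \<bar>j\<bar>)\<close> already covers coordinate \<open>j\<close>.\<close>

definition limit_point :: "int \<Rightarrow> nat" where
  "limit_point j = (let k = n0 + 2 * nat \<bar>j\<bar> in B k ! nat (j + int (origin k)))"

lemma limit_point_eq_nth:
  assumes "n0 \<le> k" "0 \<le> j + int (origin k)" "j + int (origin k) < int (h k)"
  shows "limit_point j = B k ! nat (j + int (origin k))"
proof -
  have nth_embed: "B k' ! nat (j + int (origin k')) = B k ! nat (j + int (origin k))"
    if hyps: "n0 \<le> k" "k \<le> k'" "0 \<le> j + int (origin k)" "j + int (origin k) < int (h k)"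
    for k k'
  proof -
    obtain L R where "B k' = L @ B k @ R" "length L + origin k = origin k'"
      using rk_word_embed[OF hyps(1,2)] by blast
    moreover have "nat (j + int (origin k')) = length L + nat (j + int (origin k))"
      using calculation(2) hyps(3) by linarith
    ultimately show ?thesis
      using hyps(3,4) by (simp add: nth_append rk_height_def nat_less_iff)
  qed
  define K where "K = n0 + 2 * nat \<bar>j\<bar>"
  have "0 \<le> j + int (origin K)" "j + int (origin K) < int (h K)"
    using origin_margins[of "nat \<bar>j\<bar>"] unfolding K_def by linarith+
  then have "limit_point j = B (max k K) ! nat (j + int (origin (max k K)))"
    using nth_embed[of K "max k K"] by (simp add: limit_point_def K_def Let_def)
  also have "\<dots> = B k ! nat (j + int (origin k))"
    using nth_embed[of k "max k K"] assms by simp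
  finally show ?thesis .
qed

lemma window_limit_point:
  assumes "n0 \<le> k" "0 \<le> i + int (origin k)" "i + int q + int (origin k) \<le> int (h k)"
  shows "window limit_point i q = take q (drop (nat (i + int (origin k))) (B k))"
proof (rule nth_equalityI)
  show "length (window limit_point i q) = length (take q (drop (nat (i + int (origin k))) (B k)))"
    using assms(2,3) by (simp add: window_def rk_height_def)
next
  fix l assume "l < length (window limit_point i q)"
  then have l: "l < q" by (simp add: window_def)
  have "window limit_point i q ! l = limit_point (i + int l)"
    using l by (simp add: window_def)
  also have "\<dots> = B k ! nat (i + int l + int (origin k))"
    using assms l by (intro limit_point_eq_nth) linarith+
  also have "nat (i + int l + int (origin k)) = nat (i + int (origin k)) + l"
    using assms(2) by linarith
  also have "B k ! \<dots> = take q (drop (nat (i + int (origin k))) (B k)) ! l"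
    using assms(3) l by (simp add: rk_height_def)
  finally show "window limit_point i q ! l = take q (drop (nat (i + int (origin k))) (B k)) ! l" .
qed

lemma window_limit_point_sublist: "\<exists>n\<ge>1. sublist (window limit_point i q) (B n)"
proof -
  define k where "k = n0 + 2 * (nat \<bar>i\<bar> + q)"
  have "window limit_point i q = take q (drop (nat (i + int (origin k))) (B k))"
    using origin_margins[of "nat \<bar>i\<bar> + q"] unfolding k_def
    by (intro window_limit_point) linarith+
  moreover have "sublist (take q (drop p (B k))) (B k)" for p
    by (meson sublist_drop sublist_order.order_trans sublist_take)
  ultimately show ?thesis
    using n0 by (intro exI[of _ k]) (simp add: k_def)
qed

lemma limit_point_in_subshift: "limit_point \<in> rk_subshift r s"
proof -
  have "limit_point j \<in> {0, 1}" for j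
  proof -
    obtain n where "sublist (window limit_point j 1) (B n)"
      using window_limit_point_sublist by blast
    then have "set (window limit_point j 1) \<subseteq> {0, 1}"
      using set_rk_word set_mono_sublist by blast
    then show ?thesis by (simp add: window_def)
  qed
  then show ?thesis
    using window_limit_point_sublist by (simp add: rk_subshift_def)
qed


lemma sublist_rk_word_imp_window:
  assumes "sublist w (B n0)"
  shows "\<exists>x\<in>rk_subshift r s. \<exists>i. w = window x i (length w)"
proof -
  obtain u v where uv: "B n0 = u @ w @ v" using assms by (auto simp: sublist_def)
  have "origin n0 = 0" by (simp add: origin_def)
  then have "window limit_point (int (length u)) (length w) = take (length w) (drop (length u) (B n0))"
    using window_limit_point[OF order.refl, of "int (length u)" "length w"] uv
    by (simp add: rk_height_def)
  then show ?thesis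
    using limit_point_in_subshift uv by (metis append_eq_conv_conj)
qed

end

definition factor :: "nat list \<Rightarrow> bool" where
  "factor w \<longleftrightarrow> (\<exists>n\<ge>1. sublist w (B n))"

definition factors :: "nat \<Rightarrow> nat list set" where
  "factors q = {w. length w = q \<and> factor w}"

definition right_special :: "nat list \<Rightarrow> bool" where
  "right_special w \<longleftrightarrow> factor (w @ [0]) \<and> factor (w @ [1])"

lemma factor_sublist: "factor w \<Longrightarrow> sublist v w \<Longrightarrow> factor v"
  unfolding factor_def by (meson sublist_order.order_trans)

lemma set_factor: "factor w \<Longrightarrow> set w \<subseteq> {0, 1}"
  unfolding factor_def using set_rk_word set_mono_sublist by blast

lemma factor_append_right: "factor w \<Longrightarrow> \<exists>x. factor (w @ [x])"
proof -
  assume "factor w"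
  then obtain n u v where n: "n \<ge> 1" and uv: "B n = u @ w @ v"
    by (auto simp: factor_def sublist_def)
  obtain R where R: "B (Suc n) = B n @ replicate (s n 0) 1 @ B n @ R"
    using rk_word_Suc_first[OF n] by blast
  obtain z where z: "B n = 0 # z" using rk_word_Cons by blast
  obtain x y where "v @ replicate (s n 0) 1 @ B n @ R = x # y"
    using z by (cases "v @ replicate (s n 0) 1 @ B n @ R") auto
  then have "B (Suc n) = u @ (w @ [x]) @ y" using R uv by simp
  then have "sublist (w @ [x]) (B (Suc n))" by (metis sublist_appendI)
  then show ?thesis unfolding factor_def by (intro exI[of _ x] exI[of _ "Suc n"]) simp
qed

lemma finite_factors: "finite (factors q)"
proof (rule finite_subset)
  show "factors q \<subseteq> {w. set w \<subseteq> {0, 1} \<and> length w = q}"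
    using set_factor by (auto simp: factors_def)
  show "finite {w. set w \<subseteq> {0::nat, 1} \<and> length w = q}"
    by (rule finite_lists_length_eq) simp
qed

lemma set_window_subshift:
  assumes "x \<in> rk_subshift r s"
  shows "set (window x i q) \<subseteq> {0, 1}"
proof -
  have "\<forall>k. x k \<in> {0, 1}" using assms unfolding rk_subshift_def by blast
  then show ?thesis unfolding window_def by force
qed

lemma card_factors_le_complexity: "card (factors q) \<le> complexity r s q"
  unfolding complexity_def
proof (rule card_mono)
  show "finite {w. length w = q \<and> (\<exists>x\<in>rk_subshift r s. \<exists>i. w = window x i q)}"
  proof (rule finite_subset)
    show "{w. length w = q \<and> (\<exists>x\<in>rk_subshift r s. \<exists>i. w = window x i q)}
          \<subseteq> {w. set w \<subseteq> {0, 1} \<and> length w = q}"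
    proof (rule subsetI)
      fix w assume "w \<in> {w. length w = q \<and> (\<exists>x\<in>rk_subshift r s. \<exists>i. w = window x i q)}"
      then obtain x i where "x \<in> rk_subshift r s" "w = window x i q" "length w = q"
        by blast
      then show "w \<in> {w. set w \<subseteq> {0, 1} \<and> length w = q}"
        using set_window_subshift by blast
    qed
    show "finite {w. set w \<subseteq> {0::nat, 1} \<and> length w = q}"
      by (rule finite_lists_length_eq) simp
  qed
  show "factors q \<subseteq> {w. length w = q \<and> (\<exists>x\<in>rk_subshift r s. \<exists>i. w = window x i q)}"
    using sublist_rk_word_imp_window by (fastforce simp: factors_def factor_def)
qed

text \<open>Every factor has a right extension, and a right special one has two.\<close>

lemma card_factors_Suc:
  "card (factors q) + card {w \<in> factors q. right_special w} \<le> card (factors (Suc q))"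
proof -
  define E where "E x = {w \<in> factors q. factor (w @ [x])}" for x :: nat
  have fin: "finite (E x)" for x
    using finite_factors by (simp add: E_def)
  have "factors q \<subseteq> E 0 \<union> E 1"
  proof
    fix w assume w: "w \<in> factors q"
    then obtain x where x: "factor (w @ [x])"
      using factor_append_right by (auto simp: factors_def)
    then have "x \<in> {0, 1}" using set_factor by fastforce
    with w x show "w \<in> E 0 \<union> E 1" by (auto simp: E_def)
  qed
  then have "E 0 \<union> E 1 = factors q" by (auto simp: E_def)
  have E01: "E 0 \<inter> E 1 = {w \<in> factors q. right_special w}"
    by (auto simp: E_def right_special_def)
  have "card (factors q) + card {w \<in> factors q. right_special w} = card (E 0) + card (E 1)"
    using card_Un_Int[OF fin fin, of 0 1] \<open>E 0 \<union> E 1 = factors q\<close> E01 by simp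
  also have "\<dots> = card ((\<lambda>w. w @ [0]) ` E 0 \<union> (\<lambda>w. w @ [1]) ` E 1)"
    using fin by (subst card_Un_disjoint) (auto simp: card_image inj_on_def)
  also have "\<dots> \<le> card (factors (Suc q))"
    by (intro card_mono finite_factors) (auto simp: E_def factors_def)
  finally show ?thesis .
qed

lemma card_factors_ge:
  assumes "\<And>q. q \<in> G \<Longrightarrow> 2 \<le> card {w \<in> factors q. right_special w}"
  shows "2 * card {i \<in> G. i < q} \<le> card (factors q)"
proof (induction q)
  case (Suc q)
  have "{i \<in> G. i < Suc q} = (if q \<in> G then insert q {i \<in> G. i < q} else {i \<in> G. i < q})"
    by (auto simp: less_Suc_eq)
  then have "2 * card {i \<in> G. i < Suc q} \<le> 2 * card {i \<in> G. i < q} + (if q \<in> G then 2 else 0)"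
    by (simp add: card_insert_if)
  also have "\<dots> \<le> card (factors q) + card {w \<in> factors q. right_special w}"
    using Suc.IH assms[of q] by auto
  also have "\<dots> \<le> card (factors (Suc q))" by (rule card_factors_Suc)
  finally show ?case .
qed simp

lemma right_special_imp_factor: "right_special w \<Longrightarrow> factor w"
  unfolding right_special_def using factor_sublist by blast

definition spacer_values :: "nat \<Rightarrow> nat set" where
  "spacer_values n = {s m i | m i. m \<ge> n \<and> i < r m}"

lemma spacer_values_antimono: "n \<le> n' \<Longrightarrow> spacer_values n' \<subseteq> spacer_values n"
  unfolding spacer_values_def using order_trans by blast

lemma spacer_values_mem: "i < r n \<Longrightarrow> s n i \<in> spacer_values n"
  by (auto simp: spacer_values_def)

definition min_spacer :: "nat \<Rightarrow> nat" where
  "min_spacer n = (LEAST v. v \<in> spacer_values n)"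

lemma min_spacer_le: "v \<in> spacer_values n \<Longrightarrow> min_spacer n \<le> v"
  unfolding min_spacer_def by (rule Least_le)

lemma spacer_values_above_min:
  assumes "x \<in> spacer_values n" "y \<in> spacer_values n" "z \<in> spacer_values n"
    and "x \<noteq> y" "x \<noteq> z" "y \<noteq> z"
  shows "\<exists>b\<in>spacer_values n. \<exists>c\<in>spacer_values n. min_spacer n < b \<and> b < c"
proof -
  have "\<exists>b\<in>{x, y, z}. \<exists>c\<in>{x, y, z}. min_spacer n < b \<and> b < c"
    using assms min_spacer_le[OF assms(1)] min_spacer_le[OF assms(2)] min_spacer_le[OF assms(3)]
    by auto
  then show ?thesis using assms(1-3) by blast
qed

lemma spacer_values_above_min_infinitely_often:
  assumes "infinite {n. n \<ge> 1 \<and> (\<exists>a b c. a \<noteq> b \<and> a \<noteq> c \<and> b \<noteq> c \<and>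
      a \<in> spacer_values n \<and> b \<in> spacer_values n \<and> c \<in> spacer_values n)}"
  shows "\<exists>b\<in>spacer_values n. \<exists>c\<in>spacer_values n. min_spacer n < b \<and> b < c"
proof -
  obtain n' where "n \<le> n'" and "\<exists>a b c. a \<noteq> b \<and> a \<noteq> c \<and> b \<noteq> c \<and>
      a \<in> spacer_values n' \<and> b \<in> spacer_values n' \<and> c \<in> spacer_values n'"
    using assms unfolding infinite_nat_iff_unbounded_le by blast
  then obtain x y z where "x \<in> spacer_values n'" "y \<in> spacer_values n'" "z \<in> spacer_values n'"
    and ne: "x \<noteq> y" "x \<noteq> z" "y \<noteq> z"
    by blast
  then have "x \<in> spacer_values n" "y \<in> spacer_values n" "z \<in> spacer_values n"
    using spacer_values_antimono[OF \<open>n \<le> n'\<close>] by auto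
  then show ?thesis by (rule spacer_values_above_min[OF _ _ _ ne])
qed

lemma tail_word_exists:
  assumes "\<exists>N. \<forall>n\<ge>N. s n (r n) = 0"
  obtains N e where "N \<ge> 1" "\<forall>k\<ge>N. s k (r k) = 0" "\<exists>P. B N = P @ 0 # replicate e 1"
proof -
  obtain N0 where "\<forall>k\<ge>N0. s k (r k) = 0" using assms by blast
  then have N: "max N0 1 \<ge> 1" "\<forall>k\<ge>max N0 1. s k (r k) = 0" by simp_all
  have "0 \<in> set (B (max N0 1))"
    using rk_word_Cons by (metis list.set_intros(1))
  then obtain P e where "B (max N0 1) = P @ 0 # replicate e 1"
    using split_last_zero set_rk_word by blast
  with N show thesis using that by blast
qed

definition spacer_density :: "nat \<Rightarrow> real" where
  "spacer_density n = real (\<Sum>i\<le>r n. s n i) / (real (r n) * real (h n))"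

lemma spacer_density_tendsto_zero:
  assumes "rk_finite_measure r s"
  shows "spacer_density \<longlonglongrightarrow> 0"
proof -
  have "(\<lambda>n. if n \<ge> 1 then spacer_density n else 0) \<longlonglongrightarrow> 0"
    using summable_LIMSEQ_zero assms unfolding rk_finite_measure_def spacer_density_def by blast
  moreover have "\<forall>\<^sub>F n in sequentially. (if n \<ge> 1 then spacer_density n else 0) = spacer_density n"
    using eventually_ge_at_top[of 1] by (rule eventually_mono) simp
  ultimately show ?thesis by (rule Lim_transform_eventually)
qed

lemma spacer_density_nonneg: "spacer_density n \<ge> 0"
  unfolding spacer_density_def by (auto intro!: divide_nonneg_nonneg sum_nonneg)

lemma min_spacer_le_density:
  assumes "n \<ge> 1"
  shows "real (min_spacer n) \<le> spacer_density n * real (h n)"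
proof -
  have "real (r n) * real (min_spacer n) = (\<Sum>i<r n. real (min_spacer n))" by simp
  also have "\<dots> \<le> (\<Sum>i<r n. real (s n i))"
    by (intro sum_mono) (simp add: min_spacer_le spacer_values_mem)
  also have "\<dots> \<le> (\<Sum>i\<le>r n. real (s n i))" by (intro sum_mono2) auto
  finally show ?thesis
    using cut_pos[OF assms] rk_height_pos[of n] by (simp add: spacer_density_def field_simps)
qed

context
  fixes N e :: nat
  assumes N: "N \<ge> 1" and tail: "\<forall>k\<ge>N. s k (r k) = 0"
    and tail_word: "\<exists>P. B N = P @ 0 # replicate e 1"
begin

lemma suffix_rk_word_tail:
  assumes "N \<le> n" "suffix u (B n)" "e < length u"
  shows "\<exists>P. u = P @ 0 # replicate e 1"
proof -
  obtain P where P: "B N = P @ 0 # replicate e 1" using tail_word by blast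
  obtain v where "B n = v @ B N"
    using suffix_rk_word[OF N assms(1)] tail by (auto simp: suffix_def)
  with P obtain P' where P': "B n = P' @ 0 # replicate e 1" by auto
  obtain v' where v': "B n = v' @ u" using assms(2) by (auto simp: suffix_def)
  have "length v' + length u = length P' + Suc e"
    using arg_cong[OF v', of length] arg_cong[OF P', of length] by simp
  then have "length v' \<le> length P'" using assms(3) by linarith
  then have "u = drop (length v') P' @ 0 # replicate e 1"
    using arg_cong[OF v', of "drop (length v')"] P' by simp
  then show ?thesis by blast
qed

lemma factor_suffix_spacer_zero:
  assumes "N \<le> n" "k \<in> spacer_values n" "suffix u (B n)"
  shows "factor (u @ replicate k 1 @ [0])"
proof -
  obtain m i where mi: "k = s m i" "n \<le> m" "i < r m"
    using assms(2) by (auto simp: spacer_values_def)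
  have m: "m \<ge> 1" using mi N assms(1) by simp
  have "suffix (B n) (B m)"
    using suffix_rk_word[of n m] N tail assms(1) mi(2) by simp
  then obtain p where p: "B m = p @ u" using assms(3) by (auto simp: suffix_def)
  obtain z where z: "B m = 0 # z" using rk_word_Cons by blast
  have "B m @ replicate k 1 @ B m = p @ (u @ replicate k 1 @ [0]) @ z"
    using p z by (metis append.assoc append_Cons append_Nil)
  then have "sublist (u @ replicate k 1 @ [0]) (B (Suc m))"
    using sublist_rk_word_spacer[OF m mi(3)] mi(1)
    by (metis sublist_appendI sublist_order.order_trans)
  then show ?thesis unfolding factor_def by (intro exI[of _ "Suc m"]) simp
qed

lemma right_special_suffix_spacer:
  assumes "N \<le> n" "k \<in> spacer_values n" "k' \<in> spacer_values n" "k < k'" "suffix u (B n)"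
  shows "right_special (u @ replicate k 1)"
proof -
  have "k' = k + Suc (k' - Suc k)" using assms(4) by simp
  then have "replicate k' (1::nat) = replicate k 1 @ 1 # replicate (k' - Suc k) 1"
    by (metis replicate_Suc replicate_add)
  then have "u @ replicate k' 1 @ [0] = (u @ replicate k 1 @ [1]) @ replicate (k' - Suc k) 1 @ [0]"
    by simp
  then have "sublist (u @ replicate k 1 @ [1]) (u @ replicate k' 1 @ [0])"
    by (metis sublist_append_rightI)
  then show ?thesis
    using factor_suffix_spacer_zero[OF assms(1,2,5)] factor_suffix_spacer_zero[OF assms(1,3,5)]
    by (auto simp: right_special_def intro: factor_sublist)
qed

lemma right_special_ones:
  assumes "N \<le> n" "c \<in> spacer_values n" "q < c"
  shows "right_special (replicate q 1)"
proof -
  have c: "factor (replicate c 1 @ [0])"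
    using factor_suffix_spacer_zero[OF assms(1,2), of "[]"] by simp
  have "c = (c - q) + q" "c = q + Suc (c - Suc q)" using assms(3) by simp_all
  then have "replicate c (1::nat) @ [0] = replicate (c - q) 1 @ (replicate q 1 @ [0])"
    "replicate c (1::nat) @ [0] = (replicate q 1 @ [1]) @ replicate (c - Suc q) 1 @ [0]"
    by (metis append.assoc replicate_add, metis append.assoc append_Cons append_Nil replicate_Suc replicate_add)
  then show ?thesis
    using c unfolding right_special_def
    by (metis factor_sublist sublist_append_leftI sublist_append_rightI)
qed

lemma right_special_tail_spacer:
  assumes "N \<le> n" "k \<in> spacer_values n" "k' \<in> spacer_values n" "k < k'"
    and "k + e < q" "q \<le> k + h n"
  obtains P where "right_special (P @ 0 # replicate (e + k) 1)"
    "length (P @ 0 # replicate (e + k) 1) = q"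
proof -
  define u where "u = drop (h n - (q - k)) (B n)"
  have u: "suffix u (B n)" "length u = q - k"
    using assms(6) by (auto simp: u_def suffix_drop rk_height_def)
  then obtain P where P: "u = P @ 0 # replicate e 1"
    using suffix_rk_word_tail[OF assms(1)] assms(5) by fastforce
  have "right_special (u @ replicate k 1)"
    by (rule right_special_suffix_spacer[OF assms(1-4) u(1)])
  moreover have "u @ replicate k 1 = P @ 0 # replicate (e + k) 1"
    by (simp add: P replicate_add)
  ultimately show thesis
    using that[of P] u(2) assms(5) P by simp
qed

lemma two_right_specials:
  assumes "N \<le> n" and abc: "a \<in> spacer_values n" "b \<in> spacer_values n" "c \<in> spacer_values n"
    "a < b" "b < c"
    and q: "a + e < q" "q < a + h n" "q < c \<or> b + e < q"
  shows "2 \<le> card {w \<in> factors q. right_special w}"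
proof -
  obtain P where P: "right_special (P @ 0 # replicate (e + a) 1)"
    "length (P @ 0 # replicate (e + a) 1) = q"
    using right_special_tail_spacer[OF assms(1) abc(1,2,4) q(1) less_imp_le[OF q(2)]] by blast
  obtain w where w: "right_special w" "length w = q" "w \<noteq> P @ 0 # replicate (e + a) 1"
  proof (cases "q < c")
    case True
    have "replicate q (1::nat) \<noteq> P @ 0 # replicate (e + a) 1"
    proof
      assume "replicate q (1::nat) = P @ 0 # replicate (e + a) 1"
      then have "0 \<in> set (replicate q (1::nat))" by simp
      then show False by simp
    qed
    then show thesis
      using that[of "replicate q 1"] right_special_ones[OF assms(1) abc(3) True] by simp
  next
    case False
    then have "b + e < q" "q \<le> b + h n" using q abc(4) by simp_all
    then obtain P' where "right_special (P' @ 0 # replicate (e + b) 1)"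
      "length (P' @ 0 # replicate (e + b) 1) = q"
      using right_special_tail_spacer[OF assms(1) abc(2,3,5)] by blast
    moreover have "P' @ 0 # replicate (e + b) 1 \<noteq> P @ 0 # replicate (e + a) (1::nat)"
      using append_Cons_replicate_eq_imp_eq[of 0 1 P' "e + b" P "e + a"] abc(4) by auto
    ultimately show thesis using that by blast
  qed
  have "{P @ 0 # replicate (e + a) 1, w} \<subseteq> {w \<in> factors q. right_special w}"
    using P w by (auto simp: factors_def right_special_imp_factor)
  moreover have "finite {w \<in> factors q. right_special w}"
    using finite_factors by simp
  moreover have "card {P @ 0 # replicate (e + a) 1, w} = 2"
    using w(3) by simp
  ultimately show ?thesis by (metis card_mono)
qed

lemma complexity_ge:
  assumes "N \<le> n" "a \<in> spacer_values n" "b \<in> spacer_values n" "c \<in> spacer_values n"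
    "a < b" "b < c"
  shows "2 * (h n - (2 * e + 1)) \<le> complexity r s (a + h n)"
proof -
  define G where "G = {a + e + 1..<a + h n} - {c..<b + e + 1}"
  have "h n - (2 * e + 1) \<le> card {a + e + 1..<a + h n} - card {c..<b + e + 1}"
    using assms(6) by simp
  also have "\<dots> \<le> card G"
    unfolding G_def by (rule diff_card_le_card_Diff) simp
  also have "\<dots> = card {i \<in> G. i < a + h n}"
    by (rule arg_cong[of _ _ card]) (auto simp: G_def)
  finally have "2 * (h n - (2 * e + 1)) \<le> 2 * card {i \<in> G. i < a + h n}" by simp
  also have "\<dots> \<le> card (factors (a + h n))"
    using two_right_specials[OF assms] by (intro card_factors_ge) (auto simp: G_def)
  also have "\<dots> \<le> complexity r s (a + h n)"
    by (rule card_factors_le_complexity)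
  finally show ?thesis .
qed

lemma complexity_ratio_ge:
  assumes "N \<le> n" "2 * e + 1 \<le> n" and bc: "b \<in> spacer_values n" "c \<in> spacer_values n"
    "min_spacer n < b" "b < c"
  shows "2 * (1 - (2 * e + 1) / h n) / (1 + spacer_density n)
         \<le> complexity r s (min_spacer n + h n) / real (min_spacer n + h n)"
proof -
  have n: "n \<ge> 1" using N assms(1) by simp
  have a: "min_spacer n \<in> spacer_values n"
    unfolding min_spacer_def using bc(1) by (rule LeastI)
  have hn: "2 * e + 1 \<le> h n" "real (h n) > 0"
    using assms(2) rk_height_ge[of n] rk_height_pos[of n] by simp_all
  have "2 * (1 - (2 * e + 1) / h n) / (1 + spacer_density n)
        = 2 * real (h n - (2 * e + 1)) / ((1 + spacer_density n) * h n)"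
    using hn by (simp add: field_simps of_nat_diff)
  also have "\<dots> \<le> 2 * real (h n - (2 * e + 1)) / real (min_spacer n + h n)"
    using min_spacer_le_density[OF n] hn spacer_density_nonneg[of n]
    by (intro divide_left_mono mult_pos_pos) (simp_all add: algebra_simps)
  also have "\<dots> \<le> complexity r s (min_spacer n + h n) / real (min_spacer n + h n)"
    using complexity_ge[OF assms(1) a bc] hn
    by (intro divide_right_mono) (simp_all flip: of_nat_mult)
  finally show ?thesis .
qed

lemma limsup_complexity_ratio_ge_2:
  assumes above_min: "\<And>n. \<exists>b\<in>spacer_values n. \<exists>c\<in>spacer_values n. min_spacer n < b \<and> b < c"
    and fin: "rk_finite_measure r s"
  shows "2 \<le> limsup (\<lambda>q. ereal (real (complexity r s q) / real q))"
proof -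
  have "\<forall>\<^sub>F n in sequentially. 2 * (1 - (2 * e + 1) / h n) / (1 + spacer_density n)
          \<le> complexity r s (min_spacer n + h n) / real (min_spacer n + h n)"
    using eventually_ge_at_top[of "max N (2 * e + 1)"]
  proof eventually_elim
    case (elim n)
    obtain b c where "b \<in> spacer_values n" "c \<in> spacer_values n" "min_spacer n < b" "b < c"
      using above_min by blast
    with elim show ?case using complexity_ratio_ge[of n b c] by simp
  qed
  moreover have "(\<lambda>n. 2 * (1 - (2 * e + 1) / h n) / (1 + spacer_density n)) \<longlonglongrightarrow> 2"
  proof -
    have "filterlim (\<lambda>n. real (h n)) at_top sequentially"
      by (rule filterlim_at_top_mono[OF filterlim_real_sequentially]) (simp add: rk_height_ge)
    then have "(\<lambda>n. (2 * e + 1) / real (h n)) \<longlonglongrightarrow> 0"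
      by (intro tendsto_divide_0[OF tendsto_const] filterlim_at_top_imp_at_infinity)
    then have "(\<lambda>n. 2 * (1 - (2 * e + 1) / h n) / (1 + spacer_density n))
               \<longlonglongrightarrow> 2 * (1 - 0) / (1 + 0)"
      by (intro tendsto_intros spacer_density_tendsto_zero[OF fin]) simp_all
    then show ?thesis by simp
  qed
  moreover have "filterlim (\<lambda>n. min_spacer n + h n) at_top sequentially"
    by (rule filterlim_at_top_mono[OF filterlim_ident]) (simp add: trans_le_add2 rk_height_ge)
  ultimately have "ereal 2 \<le> limsup (\<lambda>q. ereal (real (complexity r s q) / real q))"
    by (rule limsup_ge_tendsto_along)
  then show ?thesis by simp
qed

end

end

theorem proposition2p5:
  fixes r :: "nat \<Rightarrow> nat" and s :: "nat \<Rightarrow> nat \<Rightarrow> nat"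
  assumes cut_pos: "\<forall>n\<ge>1. r n \<ge> 1"
    and fin: "rk_finite_measure r s"
    and last_zero: "\<exists>N. \<forall>n\<ge>N. s n (r n) = 0"
    and three: "infinite {n. n \<ge> 1 \<and>
        (\<exists>a b c. a \<noteq> b \<and> a \<noteq> c \<and> b \<noteq> c \<and>
           a \<in> {s m i | m i. m \<ge> n \<and> i < r m} \<and>
           b \<in> {s m i | m i. m \<ge> n \<and> i < r m} \<and>
           c \<in> {s m i | m i. m \<ge> n \<and> i < r m})}"
  shows "limsup (\<lambda>q. ereal (real (complexity r s q) / real q)) \<ge> 2"
proof -
  interpret rank_one r s using cut_pos by unfold_locales simp
  obtain N e where "N \<ge> 1" "\<forall>k\<ge>N. s k (r k) = 0" "\<exists>P. B N = P @ 0 # replicate e 1"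
    using last_zero by (rule tail_word_exists)
  moreover have "\<exists>b\<in>spacer_values n. \<exists>c\<in>spacer_values n. min_spacer n < b \<and> b < c" for n
    by (rule spacer_values_above_min_infinitely_often, unfold spacer_values_def, fact three)
  ultimately show ?thesis using fin by (rule limsup_complexity_ratio_ge_2)
qed

end
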